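(* Define, for every $\sigma$-algebra $\mathcal{A}$ and $P,Q\in\Delta(\Theta,\mathcal{A})$, $D(Q\|P)=\operatorname{ess\,sup}_P(1-\frac{dQ}{dP})$ if $Q\ll P$ and $D(Q\|P)=\infty$ otherwise (the contamination divergence). Then $D$ satisfies properties (D1)–(D5) below. Moreover, for every $P\in\Delta(\Theta,\mathcal{B})$ and $\eta>0$, $$\{Q\in\Delta(\Theta,\mathcal{B}):D(Q\|P)\le\eta\}=\{Q\in\Delta(\Theta,\mathcal{B}):Q=(1-\eta)P+\eta R\text{ for some }R\in\Delta(\Theta,\mathcal{B})\text{ with }R\ll P\}.$$
   Context: $\Theta=[\underline\theta,\bar\theta]\subset\mathbb{R}$, Borel $\sigma$-algebra $\mathcal{B}$; "$\sigma$-algebra" means sub-$\sigma$-algebra of $\mathcal{B}$; $\Delta(\Theta,\mathcal{A})$ is the set of probability measures on $(\Theta,\mathcal{A})$; for $\mathcal{E}\subset\mathcal{A}$, $P_{\mathcal{E}}$ is the restriction of $P$ to $\mathcal{E}$. Properties, for every $\sigma$-algebra $\mathcal{A}$ and $P,Q\in\Delta(\Theta,\mathcal{A})$: (D1) $D(Q\|P)=0$ if $Q=P$; (D2) if $Q\ll P$ and $dQ/dP$ is bounded, $\epsilon\mapsto D(\epsilon Q+(1-\epsilon)P\|P)$ is continuous on $[0,1]$; (D3) $D(Q\|P)<\infty$ implies $Q\ll P$; (D4) $D(Q_{\mathcal{E}}\|P_{\mathcal{E}})\le D(Q\|P)$ for every sub-$\sigma$-algebra $\mathcal{E}\subset\mathcal{A}$;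 (D5) $D(Q_{\mathcal{E}}\|P_{\mathcal{E}})=D(Q\|P)$ if $dQ_{\mathcal{E}}/dP_{\mathcal{E}}=dQ/dP$ $P$-a.e. *)

theory Defs
  imports "HOL-Probability.Probability"
begin

definition Theta_B :: "real \<Rightarrow> real \<Rightarrow> real measure" where
  "Theta_B lo hi = restrict_space borel {lo..hi}"

text \<open>A sigma-algebra on Theta (sub-sigma-algebra of B) is represented as a measurable
  space A with subalgebra (Theta_B lo hi) A.\<close>

definition prob_measures :: "'a measure \<Rightarrow> 'a measure set" where
  "prob_measures A = {P. prob_space P \<and> space P = space A \<and> sets P = sets A}"

definition contam_div :: "'a measure \<Rightarrow> 'a measure \<Rightarrow> ereal" where
  "contam_div Q P =
     (if absolutely_continuous P Q
      then esssup P (\<lambda>x. 1 - enn2ereal (RN_deriv P Q x))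
      else \<infinity>)"

definition mixture :: "real \<Rightarrow> 'a measure \<Rightarrow> 'a measure \<Rightarrow> 'a measure" where
  "mixture e Q P = measure_of (space P) (sets P)
     (\<lambda>S. ennreal e * emeasure Q S + ennreal (1 - e) * emeasure P S)"

end

theory Submission
  imports Defs
begin

text \<open>For \<open>Q \<ll> P\<close> with density \<open>f = dQ/dP\<close> we have \<open>D(Q\<parallel>P) \<le> d\<close> iff \<open>f \<ge> 1 - d\<close>
  \<open>P\<close>-a.e., i.e. iff \<open>Q(A) \<ge> (1 - d) P(A)\<close> for every event \<open>A\<close>. Everything follows from
  this setwise characterisation: it gives \<open>0 \<le> D \<le> 1\<close> and \<open>D(P\<parallel>P) = 0\<close>; the mixture
  \<open>\<epsilon>Q + (1-\<epsilon>)P\<close> has divergence exactly \<open>\<epsilon> D(Q\<parallel>P)\<close>, so (D2) holds even without the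
  boundedness hypothesis; setwise inequalities survive restriction to a sub-\<open>\<sigma>\<close>-algebra (D4);
  and \<open>Q \<ge> (1-\<eta>)P\<close> setwise says exactly that \<open>R = (Q - (1-\<eta>)P)/\<eta>\<close> is a probability
  measure. For (D5), the essential supremum of an \<open>E\<close>-measurable function is the same under
  \<open>P\<close> and under its restriction to \<open>E\<close>.\<close>

text \<open>The coefficient \<open>a\<close> may exceed 1: the witness \<open>R\<close> for the contamination neighbourhood
  is \<open>affine_comb_measure (1/\<eta>) Q P\<close>, which is a measure only because the combination is
  setwise nonnegative.\<close>
definition affine_comb_measure :: "real \<Rightarrow> 'a measure \<Rightarrow> 'a measure \<Rightarrow> 'a measure" where
  "affine_comb_measure a Q P =
     measure_of (space P) (sets P) (\<lambda>A. ennreal (a * measure Q A + (1 - a) * measure P A))"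

lemma sets_affine_comb_measure [simp]: "sets (affine_comb_measure a Q P) = sets P"
  and space_affine_comb_measure [simp]: "space (affine_comb_measure a Q P) = space P"
  by (simp_all add: affine_comb_measure_def)

context
  fixes P Q :: "'a measure" and a :: real
  assumes P: "finite_measure P" and Q: "finite_measure Q" and sets_Q: "sets Q = sets P"
    and nonneg: "\<And>A. A \<in> sets P \<Longrightarrow> 0 \<le> a * measure Q A + (1 - a) * measure P A"
begin

lemma emeasure_affine_comb_measure:
  assumes A: "A \<in> sets P"
  shows "emeasure (affine_comb_measure a Q P) A = ennreal (a * measure Q A + (1 - a) * measure P A)"
  unfolding affine_comb_measure_def
proof (rule emeasure_measure_of_sigma[OF sets.sigma_algebra_axioms _ _ A])
  show "positive (sets P) (\<lambda>A. ennreal (a * measure Q A + (1 - a) * measure P A))"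
    by (simp add: positive_def)
  show "countably_additive (sets P) (\<lambda>A. ennreal (a * measure Q A + (1 - a) * measure P A))"
    unfolding countably_additive_def
  proof (intro allI impI)
    fix F :: "nat \<Rightarrow> 'a set"
    assume F: "range F \<subseteq> sets P" "disjoint_family F" "\<Union>(range F) \<in> sets P"
    have "(\<lambda>i. measure P (F i)) sums measure P (\<Union>i. F i)"
      using F by (intro measure_UNION) (auto simp: finite_measure.emeasure_finite[OF P])
    moreover have "(\<lambda>i. measure Q (F i)) sums measure Q (\<Union>i. F i)"
      using F sets_Q by (intro measure_UNION) (auto simp: finite_measure.emeasure_finite[OF Q])
    ultimately have "(\<lambda>i. a * measure Q (F i) + (1 - a) * measure P (F i))
        sums (a * measure Q (\<Union>i. F i) + (1 - a) * measure P (\<Union>i. F i))"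
      by (intro sums_add sums_mult)
    then show "(\<Sum>i. ennreal (a * measure Q (F i) + (1 - a) * measure P (F i)))
        = ennreal (a * measure Q (\<Union>(range F)) + (1 - a) * measure P (\<Union>(range F)))"
      using F(1) nonneg by (subst suminf_ennreal2) (auto simp: sums_iff)
  qed
qed

lemma measure_affine_comb_measure:
  assumes A: "A \<in> sets P"
  shows "measure (affine_comb_measure a Q P) A = a * measure Q A + (1 - a) * measure P A"
  unfolding measure_def[of "affine_comb_measure a Q P"] emeasure_affine_comb_measure[OF A]
  using nonneg[OF A] by simp

lemma absolutely_continuous_affine_comb_measure:
  assumes "absolutely_continuous P Q"
  shows "absolutely_continuous P (affine_comb_measure a Q P)"
  unfolding absolutely_continuous_def
proof
  fix A assume A: "A \<in> null_sets P"
  then have "A \<in> null_sets Q"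
    using assms by (auto simp: absolutely_continuous_def)
  with A show "A \<in> null_sets (affine_comb_measure a Q P)"
    by (auto simp: null_sets_def emeasure_affine_comb_measure measure_def)
qed

end

lemma prob_space_affine_comb_measure:
  assumes P: "prob_space P" and Q: "prob_space Q" and sets_Q: "sets Q = sets P"
    and nonneg: "\<And>A. A \<in> sets P \<Longrightarrow> 0 \<le> a * measure Q A + (1 - a) * measure P A"
  shows "prob_space (affine_comb_measure a Q P)"
proof (rule prob_spaceI)
  have "measure Q (space P) = 1" "measure P (space P) = 1"
    using prob_space.prob_space[OF Q] prob_space.prob_space[OF P] sets_eq_imp_space_eq[OF sets_Q]
    by simp_all
  then show "emeasure (affine_comb_measure a Q P) (space (affine_comb_measure a Q P)) = 1"
    using P Q sets_Q nonneg by (simp add: emeasure_affine_comb_measure prob_space.finite_measure)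
qed

lemma mixture_eq_affine_comb_measure:
  assumes "finite_measure P" "finite_measure Q" "sets Q = sets P"
    and "0 \<le> e" "e \<le> 1"
  shows "mixture e Q P = affine_comb_measure e Q P"
  unfolding mixture_def affine_comb_measure_def
proof (rule measure_of_eq[OF sets.space_closed])
  fix A assume "A \<in> sigma_sets (space P) (sets P)"
  then have "A \<in> sets P" "A \<in> sets Q"
    using \<open>sets Q = sets P\<close> by (simp_all add: sets.sigma_sets_eq)
  then show "ennreal e * emeasure Q A + ennreal (1 - e) * emeasure P A
      = ennreal (e * measure Q A + (1 - e) * measure P A)"
    using assms by (simp add: finite_measure.emeasure_eq_measure ennreal_mult)
qed

lemma esssup_le_iff:
  assumes "f \<in> borel_measurable M"
  shows "esssup M f \<le> c \<longleftrightarrow> (AE x in M. f x \<le> c)"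
  using esssup_AE[of f M] esssup_I[OF assms] by (auto elim: eventually_mono)

lemma AE_ge_const_if_set_nn_integral_ge:
  assumes f[measurable]: "f \<in> borel_measurable M"
    and finite: "emeasure M (space M) \<noteq> \<infinity>" and c: "c \<noteq> \<infinity>"
    and ge: "\<And>A. A \<in> sets M \<Longrightarrow> c * emeasure M A \<le> (\<integral>\<^sup>+x. f x * indicator A x \<partial>M)"
  shows "AE x in M. c \<le> f x"
proof -
  define N where "N = {x\<in>space M. f x < c}"
  have N[measurable]: "N \<in> sets M"
    unfolding N_def by measurable
  have int_c: "(\<integral>\<^sup>+x. c * indicator N x \<partial>M) = c * emeasure M N"
    using N by (rule nn_integral_cmult_indicator)
  have "c * emeasure M N \<noteq> \<infinity>"
    using c finite emeasure_space[of M N] by (auto simp: ennreal_mult_eq_top_iff top_unique)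
  have below_c: "f x * indicator N x \<le> c * indicator N x" for x
    by (simp add: N_def indicator_def less_imp_le)
  have "(\<integral>\<^sup>+x. f x * indicator N x \<partial>M) \<le> (\<integral>\<^sup>+x. c * indicator N x \<partial>M)"
    by (intro nn_integral_mono below_c)
  then have int_f_finite: "(\<integral>\<^sup>+x. f x * indicator N x \<partial>M) \<noteq> \<infinity>"
    using \<open>c * emeasure M N \<noteq> \<infinity>\<close> int_c by (auto simp: top_unique)
  have "AE x in M. c * indicator N x \<le> f x * indicator N x"
  proof (rule ccontr)
    assume "\<not> (AE x in M. c * indicator N x \<le> f x * indicator N x)"
    then have "(\<integral>\<^sup>+x. f x * indicator N x \<partial>M) < (\<integral>\<^sup>+x. c * indicator N x \<partial>M)"
      using below_c int_f_finite by (intro nn_integral_less) auto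
    with ge[OF N] int_c show False
      by simp
  qed
  then show ?thesis
    using AE_space
  proof eventually_elim
    fix x assume "c * indicator N x \<le> f x * indicator N x" "x \<in> space M"
    then show "c \<le> f x"
      by (cases "x \<in> N") (auto simp: N_def not_less)
  qed
qed

lemma AE_RN_deriv_ge_iff:
  assumes P: "finite_measure P" and ac: "absolutely_continuous P Q" and sets_Q: "sets Q = sets P"
    and c: "c \<noteq> \<infinity>"
  shows "(AE x in P. c \<le> RN_deriv P Q x) \<longleftrightarrow> (\<forall>A\<in>sets P. c * emeasure P A \<le> emeasure Q A)"
proof -
  interpret P: finite_measure P by fact
  have Q_density: "emeasure Q A = (\<integral>\<^sup>+x. RN_deriv P Q x * indicator A x \<partial>P)" if "A \<in> sets P" for A
    using P.density_RN_deriv[OF ac sets_Q] emeasure_density[of "RN_deriv P Q" P A] that by simp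
  show ?thesis
  proof
    assume ae: "AE x in P. c \<le> RN_deriv P Q x"
    show "\<forall>A\<in>sets P. c * emeasure P A \<le> emeasure Q A"
    proof
      fix A assume A: "A \<in> sets P"
      have "c * emeasure P A = (\<integral>\<^sup>+x. c * indicator A x \<partial>P)"
        using A by (simp add: nn_integral_cmult_indicator)
      also have "\<dots> \<le> (\<integral>\<^sup>+x. RN_deriv P Q x * indicator A x \<partial>P)"
        using ae by (intro nn_integral_mono_AE) (auto elim!: eventually_mono simp: indicator_def)
      finally show "c * emeasure P A \<le> emeasure Q A"
        using Q_density[OF A] by simp
    qed
  next
    assume "\<forall>A\<in>sets P. c * emeasure P A \<le> emeasure Q A"
    then show "AE x in P. c \<le> RN_deriv P Q x"
      using Q_density c by (intro AE_ge_const_if_set_nn_integral_ge) auto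
  qed
qed

lemma one_minus_enn2ereal_le_iff:
  assumes "d < 1"
  shows "1 - enn2ereal y \<le> ereal d \<longleftrightarrow> ennreal (1 - d) \<le> y"
  using assms by (cases y rule: ennreal_cases) (auto simp: one_ereal_def)

lemma absolutely_continuous_if_contam_div_finite:
  "contam_div Q P < \<infinity> \<Longrightarrow> absolutely_continuous P Q"
  by (auto simp: contam_div_def split: if_splits)

lemma contam_div_le_one:
  assumes "absolutely_continuous P Q"
  shows "contam_div Q P \<le> 1"
  unfolding contam_div_def if_P[OF assms] by (intro esssup_I) (auto simp: ereal_diff_le_self)

lemma contam_div_le_iff:
  assumes P: "prob_space P" and Q: "prob_space Q" and sets_Q: "sets Q = sets P"
    and ac: "absolutely_continuous P Q"
  shows "contam_div Q P \<le> ereal d \<longleftrightarrow> (\<forall>A\<in>sets P. (1 - d) * measure P A \<le> measure Q A)"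
proof (cases "d < 1")
  case True
  have "contam_div Q P \<le> ereal d \<longleftrightarrow> (AE x in P. 1 - enn2ereal (RN_deriv P Q x) \<le> ereal d)"
    using ac by (simp add: contam_div_def esssup_le_iff)
  also have "\<dots> \<longleftrightarrow> (AE x in P. ennreal (1 - d) \<le> RN_deriv P Q x)"
    using True by (simp add: one_minus_enn2ereal_le_iff)
  also have "\<dots> \<longleftrightarrow> (\<forall>A\<in>sets P. ennreal (1 - d) * emeasure P A \<le> emeasure Q A)"
    using P ac sets_Q by (intro AE_RN_deriv_ge_iff) (auto simp: prob_space.finite_measure)
  also have "\<dots> \<longleftrightarrow> (\<forall>A\<in>sets P. (1 - d) * measure P A \<le> measure Q A)"
    using True P Q sets_Q
    by (simp add: prob_space.finite_measure finite_measure.emeasure_eq_measure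
        ennreal_mult[symmetric])
  finally show ?thesis .
next
  case False
  then have "contam_div Q P \<le> ereal d"
    using contam_div_le_one[OF ac] by (simp add: one_ereal_def order_trans)
  moreover have "(1 - d) * measure P A \<le> measure Q A" for A
    using False by (smt (verit) measure_nonneg mult_nonpos_nonneg)
  ultimately show ?thesis
    by simp
qed

lemma contam_div_nonneg:
  assumes P: "prob_space P" and Q: "prob_space Q" and sets_Q: "sets Q = sets P"
    and "absolutely_continuous P Q"
  shows "0 \<le> contam_div Q P"
proof (rule ereal_le_real)
  fix d assume "contam_div Q P \<le> ereal d"
  then have "(1 - d) * measure P (space P) \<le> measure Q (space Q)"
    using contam_div_le_iff[OF assms] sets_eq_imp_space_eq[OF sets_Q] by auto
  then show "0 \<le> ereal d"
    using P Q by (simp add: prob_space.prob_space)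
qed

lemma contam_div_self:
  assumes "prob_space P"
  shows "contam_div P P = 0"
proof -
  have ac: "absolutely_continuous P P"
    by (simp add: absolutely_continuous_def)
  have "contam_div P P \<le> ereal 0"
    using contam_div_le_iff[OF assms assms refl ac] by simp
  with contam_div_nonneg[OF assms assms refl ac] show ?thesis
    by (simp add: zero_ereal_def)
qed

lemma contam_div_realE:
  assumes "prob_space P" "prob_space Q" "sets Q = sets P" "absolutely_continuous P Q"
  obtains D where "contam_div Q P = ereal D"
  using contam_div_nonneg[OF assms] contam_div_le_one[OF assms(4)]
  by (cases "contam_div Q P") auto

lemma contam_div_mixture:
  assumes P: "prob_space P" and Q: "prob_space Q" and sets_Q: "sets Q = sets P"
    and ac: "absolutely_continuous P Q" and e: "0 \<le> e" "e \<le> 1"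
  shows "contam_div (mixture e Q P) P = ereal e * contam_div Q P"
proof (cases "e = 0")
  case True
  then have "mixture e Q P = P"
    by (simp add: mixture_def measure_of_of_measure)
  with True show ?thesis
    using contam_div_self[OF P] by simp
next
  case False
  with e have "0 < e" by simp
  obtain D where D: "contam_div Q P = ereal D"
    using contam_div_realE[OF P Q sets_Q ac] .
  have finite: "finite_measure P" "finite_measure Q"
    using P Q by (simp_all add: prob_space.finite_measure)
  have nonneg: "\<And>A. A \<in> sets P \<Longrightarrow> 0 \<le> e * measure Q A + (1 - e) * measure P A"
    using e by simp
  note mixture = mixture_eq_affine_comb_measure[OF finite sets_Q e]
  have le_iff: "contam_div (mixture e Q P) P \<le> ereal d \<longleftrightarrow> ereal e * contam_div Q P \<le> ereal d"
    for d
  proof -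
    have "contam_div (mixture e Q P) P \<le> ereal d \<longleftrightarrow>
        (\<forall>A\<in>sets P. (1 - d) * measure P A \<le> measure (affine_comb_measure e Q P) A)"
      unfolding mixture
      by (rule contam_div_le_iff[OF P prob_space_affine_comb_measure[OF P Q sets_Q nonneg]
            sets_affine_comb_measure absolutely_continuous_affine_comb_measure[OF finite sets_Q nonneg ac]])
    also have "\<dots> \<longleftrightarrow>
        (\<forall>A\<in>sets P. (1 - d) * measure P A \<le> e * measure Q A + (1 - e) * measure P A)"
      by (intro ball_cong) (simp_all add: measure_affine_comb_measure[OF finite sets_Q nonneg])
    also have "\<dots> \<longleftrightarrow> (\<forall>A\<in>sets P. (1 - d / e) * measure P A \<le> measure Q A)"
    proof -
      have "(1 - d) * p \<le> e * q + (1 - e) * p \<longleftrightarrow> (1 - d / e) * p \<le> q" for p q :: real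
        using \<open>0 < e\<close> by (simp add: algebra_simps divide_simps)
      then show ?thesis by simp
    qed
    also have "\<dots> \<longleftrightarrow> contam_div Q P \<le> ereal (d / e)"
      by (rule contam_div_le_iff[OF P Q sets_Q ac, symmetric])
    also have "\<dots> \<longleftrightarrow> ereal e * contam_div Q P \<le> ereal d"
      using \<open>0 < e\<close> by (simp add: D pos_le_divide_eq mult.commute)
    finally show ?thesis .
  qed
  show ?thesis
    by (rule antisym; rule ereal_le_real) (simp_all add: le_iff)
qed

lemma continuous_on_contam_div_mixture:
  assumes P: "prob_space P" and Q: "prob_space Q" and sets_Q: "sets Q = sets P"
    and ac: "absolutely_continuous P Q"
  shows "continuous_on {0..1} (\<lambda>e. contam_div (mixture e Q P) P)"
proof -
  obtain D where D: "contam_div Q P = ereal D"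
    using contam_div_realE[OF P Q sets_Q ac] .
  have "continuous_on {0..1} (\<lambda>e. ereal (e * D))"
    by (intro continuous_on_ereal continuous_intros)
  then show ?thesis
    by (rule continuous_on_cong[THEN iffD1, rotated 2])
       (simp_all add: contam_div_mixture[OF P Q sets_Q ac] D)
qed

lemma subalgebra_cong_sets:
  "subalgebra P E \<Longrightarrow> sets Q = sets P \<Longrightarrow> subalgebra Q E"
  unfolding subalgebra_def using sets_eq_imp_space_eq by metis

lemma measure_restr_to_subalg:
  "subalgebra M F \<Longrightarrow> A \<in> sets F \<Longrightarrow> measure (restr_to_subalg M F) A = measure M A"
  unfolding measure_def by (simp add: emeasure_restr_to_subalg)

lemma absolutely_continuous_restr_to_subalg:
  assumes "subalgebra M F" "subalgebra N F" "absolutely_continuous M N"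
  shows "absolutely_continuous (restr_to_subalg M F) (restr_to_subalg N F)"
  using assms(3) null_sets_restr_to_subalg[OF assms(1)] null_sets_restr_to_subalg[OF assms(2)]
  by (auto simp: absolutely_continuous_def)

lemma contam_div_restr_to_subalg_le:
  assumes P: "prob_space P" and Q: "prob_space Q" and sets_Q: "sets Q = sets P"
    and sub: "subalgebra P E"
  shows "contam_div (restr_to_subalg Q E) (restr_to_subalg P E) \<le> contam_div Q P"
proof (cases "absolutely_continuous P Q")
  case False
  then show ?thesis
    by (simp add: contam_div_def)
next
  case ac: True
  have sub_Q: "subalgebra Q E"
    using sub sets_Q by (rule subalgebra_cong_sets)
  obtain D where D: "contam_div Q P = ereal D"
    using contam_div_realE[OF P Q sets_Q ac] .
  then have "\<forall>A\<in>sets P. (1 - D) * measure P A \<le> measure Q A"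
    using contam_div_le_iff[OF P Q sets_Q ac, of D] by simp
  then have "\<forall>A\<in>sets (restr_to_subalg P E).
      (1 - D) * measure (restr_to_subalg P E) A \<le> measure (restr_to_subalg Q E) A"
    using sub sub_Q by (auto simp: measure_restr_to_subalg sets_restr_to_subalg subalgebra_def)
  moreover have "sets (restr_to_subalg Q E) = sets (restr_to_subalg P E)"
    using sub sub_Q by (simp add: sets_restr_to_subalg)
  ultimately have "contam_div (restr_to_subalg Q E) (restr_to_subalg P E) \<le> ereal D"
    using contam_div_le_iff[OF prob_space_restr_to_subalg[OF sub P] prob_space_restr_to_subalg[OF sub_Q Q]
        _ absolutely_continuous_restr_to_subalg[OF sub sub_Q ac]]
    by blast
  with D show ?thesis
    by simp
qed

lemma esssup_restr_to_subalg:
  assumes sub: "subalgebra M F" and f[measurable]: "f \<in> borel_measurable F"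
  shows "esssup (restr_to_subalg M F) f = esssup M f"
proof -
  have "(AE x in restr_to_subalg M F. f x \<le> c) \<longleftrightarrow> (AE x in M. f x \<le> c)" for c
  proof
    assume "AE x in restr_to_subalg M F. f x \<le> c"
    then show "AE x in M. f x \<le> c"
      by (rule AE_restr_to_subalg[OF sub])
  next
    assume "AE x in M. f x \<le> c"
    then show "AE x in restr_to_subalg M F. f x \<le> c"
      by (rule AE_restr_to_subalg2[OF sub]) measurable
  qed
  then show ?thesis
    using measurable_in_subalg[OF sub f] measurable_from_subalg[OF sub f]
    by (simp add: esssup_eq_AE)
qed

lemma RN_deriv_not_absolutely_continuous:
  "\<not> absolutely_continuous M N \<Longrightarrow> RN_deriv M N = (\<lambda>_. 0)"
  using absolutely_continuousI_density unfolding RN_deriv_def by metis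

text \<open>Without absolute continuity \<open>RN_deriv P Q\<close> is the junk value 0, so the hypothesis forces
  the density of the restrictions to vanish, which is impossible for probability measures.\<close>
lemma not_absolutely_continuous_restr_to_subalg:
  assumes P: "prob_space P" and Q: "prob_space Q" and sets_Q: "sets Q = sets P"
    and sub: "subalgebra P E" and not_ac: "\<not> absolutely_continuous P Q"
    and eq: "AE x in P. RN_deriv (restr_to_subalg P E) (restr_to_subalg Q E) x = RN_deriv P Q x"
  shows "\<not> absolutely_continuous (restr_to_subalg P E) (restr_to_subalg Q E)"
proof
  assume ac: "absolutely_continuous (restr_to_subalg P E) (restr_to_subalg Q E)"
  have sub_Q: "subalgebra Q E"
    using sub sets_Q by (rule subalgebra_cong_sets)
  let ?g = "RN_deriv (restr_to_subalg P E) (restr_to_subalg Q E)"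
  interpret P_E: prob_space "restr_to_subalg P E"
    using sub P by (rule prob_space_restr_to_subalg)
  interpret Q_E: prob_space "restr_to_subalg Q E"
    using sub_Q Q by (rule prob_space_restr_to_subalg)
  have g: "?g \<in> borel_measurable E"
    using measurable_in_subalg'[OF sub borel_measurable_RN_deriv] .
  have "1 = (\<integral>\<^sup>+x. 1 \<partial>restr_to_subalg Q E)"
    by (simp add: Q_E.emeasure_space_1)
  also have "\<dots> = (\<integral>\<^sup>+x. ?g x \<partial>restr_to_subalg P E)"
    using P_E.RN_deriv_nn_integral[OF ac _ measurable_const, of 1] sub sub_Q
    by (simp add: sets_restr_to_subalg)
  also have "\<dots> = (\<integral>\<^sup>+x. ?g x \<partial>P)"
    by (rule nn_integral_subalgebra2[OF sub g])
  also have "\<dots> = (\<integral>\<^sup>+x. 0 \<partial>P)"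
    using eq by (intro nn_integral_cong_AE) (simp add: RN_deriv_not_absolutely_continuous[OF not_ac])
  finally show False
    by simp
qed

lemma contam_div_restr_to_subalg_eq:
  assumes P: "prob_space P" and Q: "prob_space Q" and sets_Q: "sets Q = sets P"
    and sub: "subalgebra P E"
    and eq: "AE x in P. RN_deriv (restr_to_subalg P E) (restr_to_subalg Q E) x = RN_deriv P Q x"
  shows "contam_div (restr_to_subalg Q E) (restr_to_subalg P E) = contam_div Q P"
proof (cases "absolutely_continuous P Q")
  case ac: True
  have sub_Q: "subalgebra Q E"
    using sub sets_Q by (rule subalgebra_cong_sets)
  let ?g = "RN_deriv (restr_to_subalg P E) (restr_to_subalg Q E)"
  have g_E[measurable]: "?g \<in> borel_measurable E"
    using measurable_in_subalg'[OF sub borel_measurable_RN_deriv] .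
  have g_P[measurable]: "?g \<in> borel_measurable P"
    using measurable_from_subalg[OF sub g_E] .
  have "contam_div (restr_to_subalg Q E) (restr_to_subalg P E) = esssup P (\<lambda>x. 1 - enn2ereal (?g x))"
    using absolutely_continuous_restr_to_subalg[OF sub sub_Q ac]
    by (simp add: contam_div_def esssup_restr_to_subalg[OF sub])
  also have "\<dots> = esssup P (\<lambda>x. 1 - enn2ereal (RN_deriv P Q x))"
    by (rule esssup_AE_cong) (use eq in \<open>auto elim: eventually_mono\<close>)
  also have "\<dots> = contam_div Q P"
    using ac by (simp add: contam_div_def)
  finally show ?thesis .
next
  case False
  then show ?thesis
    using not_absolutely_continuous_restr_to_subalg[OF P Q sets_Q sub False eq] by (simp add: contam_div_def)
qed

lemma contam_div_le_iff_contamination: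
  assumes P: "prob_space P" and Q: "prob_space Q" and sets_Q: "sets Q = sets P" and "0 < \<eta>"
  shows "contam_div Q P \<le> ereal \<eta> \<longleftrightarrow>
    (\<exists>R. prob_space R \<and> sets R = sets P \<and> absolutely_continuous P R \<and>
       (\<forall>A\<in>sets P. measure Q A = (1 - \<eta>) * measure P A + \<eta> * measure R A))"
proof
  assume le: "contam_div Q P \<le> ereal \<eta>"
  then have ac: "absolutely_continuous P Q"
    by (intro absolutely_continuous_if_contam_div_finite) (auto simp: top_unique)
  have finite: "finite_measure P" "finite_measure Q"
    using P Q by (simp_all add: prob_space.finite_measure)
  let ?R = "affine_comb_measure (1 / \<eta>) Q P"
  have lower: "(1 - \<eta>) * measure P A \<le> measure Q A" if "A \<in> sets P" for A
    using le contam_div_le_iff[OF P Q sets_Q ac] that by blast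
  have R_eq: "1 / \<eta> * measure Q A + (1 - 1 / \<eta>) * measure P A
      = (measure Q A - (1 - \<eta>) * measure P A) / \<eta>" for A
    using \<open>0 < \<eta>\<close> by (simp add: field_simps)
  have nonneg: "0 \<le> 1 / \<eta> * measure Q A + (1 - 1 / \<eta>) * measure P A" if "A \<in> sets P" for A
    unfolding R_eq using lower[OF that] \<open>0 < \<eta>\<close> by simp
  have "measure Q A = (1 - \<eta>) * measure P A + \<eta> * measure ?R A" if "A \<in> sets P" for A
    using measure_affine_comb_measure[OF finite sets_Q nonneg that] \<open>0 < \<eta>\<close>
    by (simp only: R_eq) simp
  then show "\<exists>R. prob_space R \<and> sets R = sets P \<and> absolutely_continuous P R \<and>
      (\<forall>A\<in>sets P. measure Q A = (1 - \<eta>) * measure P A + \<eta> * measure R A)"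
    using prob_space_affine_comb_measure[OF P Q sets_Q nonneg]
      absolutely_continuous_affine_comb_measure[OF finite sets_Q nonneg ac]
    by auto
next
  assume "\<exists>R. prob_space R \<and> sets R = sets P \<and> absolutely_continuous P R \<and>
      (\<forall>A\<in>sets P. measure Q A = (1 - \<eta>) * measure P A + \<eta> * measure R A)"
  then obtain R where ac_R: "absolutely_continuous P R"
    and Q_eq: "\<And>A. A \<in> sets P \<Longrightarrow> measure Q A = (1 - \<eta>) * measure P A + \<eta> * measure R A"
    by blast
  have ac: "absolutely_continuous P Q"
    unfolding absolutely_continuous_def
  proof
    fix A assume A: "A \<in> null_sets P"
    then have "A \<in> null_sets R"
      using ac_R by (auto simp: absolutely_continuous_def)
    with A have "measure Q A = 0"
      using Q_eq[of A] by (simp add: null_sets_def measure_def)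
    with A sets_Q Q show "A \<in> null_sets Q"
      by (simp add: null_sets_def prob_space.finite_measure finite_measure.emeasure_eq_measure)
  qed
  have "(1 - \<eta>) * measure P A \<le> measure Q A" if "A \<in> sets P" for A
    using Q_eq[OF that] \<open>0 < \<eta>\<close> by simp
  then show "contam_div Q P \<le> ereal \<eta>"
    using contam_div_le_iff[OF P Q sets_Q ac] by blast
qed

lemma prob_measures_iff: "M \<in> prob_measures X \<longleftrightarrow> prob_space M \<and> sets M = sets X"
  by (auto simp: prob_measures_def dest: sets_eq_imp_space_eq)

lemma contam_div_sublevel_set_eq_contamination_set:
  assumes P: "P \<in> prob_measures X" and "0 < \<eta>"
  shows "{Q\<in>prob_measures X. contam_div Q P \<le> ereal \<eta>} =
    {Q\<in>prob_measures X. \<exists>R\<in>prob_measures X. absolutely_continuous P R \<and>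
       (\<forall>S\<in>sets X. measure Q S = (1 - \<eta>) * measure P S + \<eta> * measure R S)}"
proof (intro Collect_cong conj_cong refl)
  fix Q assume Q: "Q \<in> prob_measures X"
  have "prob_space P" "prob_space Q" "sets Q = sets P" and sets_P: "sets P = sets X"
    using P Q by (auto simp: prob_measures_iff)
  from contam_div_le_iff_contamination[OF this(1-3) \<open>0 < \<eta>\<close>]
  show "contam_div Q P \<le> ereal \<eta> \<longleftrightarrow> (\<exists>R\<in>prob_measures X. absolutely_continuous P R \<and>
      (\<forall>S\<in>sets X. measure Q S = (1 - \<eta>) * measure P S + \<eta> * measure R S))"
    unfolding sets_P prob_measures_iff Bex_def by (simp only: conj_assoc)
qed

theorem lemma2:
  fixes lo hi :: real
  shows
    \<comment> \<open>(D1)\<close>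
    "(\<forall>A. subalgebra (Theta_B lo hi) A \<longrightarrow>
        (\<forall>P\<in>prob_measures A. \<forall>Q\<in>prob_measures A. Q = P \<longrightarrow> contam_div Q P = 0))
     \<and>
    \<comment> \<open>(D2)\<close>
     (\<forall>A. subalgebra (Theta_B lo hi) A \<longrightarrow>
        (\<forall>P\<in>prob_measures A. \<forall>Q\<in>prob_measures A.
           absolutely_continuous P Q \<and> (\<exists>C::real. AE x in P. RN_deriv P Q x \<le> ennreal C)
           \<longrightarrow> continuous_on {0..1} (\<lambda>e. contam_div (mixture e Q P) P)))
     \<and>
    \<comment> \<open>(D3)\<close>
     (\<forall>A. subalgebra (Theta_B lo hi) A \<longrightarrow>
        (\<forall>P\<in>prob_measures A. \<forall>Q\<in>prob_measures A.
           contam_div Q P < \<infinity> \<longrightarrow> absolutely_continuous P Q))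
     \<and>
    \<comment> \<open>(D4)\<close>
     (\<forall>A. subalgebra (Theta_B lo hi) A \<longrightarrow>
        (\<forall>P\<in>prob_measures A. \<forall>Q\<in>prob_measures A. \<forall>E. subalgebra A E \<longrightarrow>
           contam_div (restr_to_subalg Q E) (restr_to_subalg P E) \<le> contam_div Q P))
     \<and>
    \<comment> \<open>(D5)\<close>
     (\<forall>A. subalgebra (Theta_B lo hi) A \<longrightarrow>
        (\<forall>P\<in>prob_measures A. \<forall>Q\<in>prob_measures A. \<forall>E. subalgebra A E \<longrightarrow>
           (AE x in P. RN_deriv (restr_to_subalg P E) (restr_to_subalg Q E) x = RN_deriv P Q x)
           \<longrightarrow> contam_div (restr_to_subalg Q E) (restr_to_subalg P E) = contam_div Q P))
     \<and>
    \<comment> \<open>Contamination neighbourhood characterization\<close>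
     (\<forall>P\<in>prob_measures (Theta_B lo hi). \<forall>\<eta>::real. \<eta> > 0 \<longrightarrow>
        {Q\<in>prob_measures (Theta_B lo hi). contam_div Q P \<le> ereal \<eta>} =
        {Q\<in>prob_measures (Theta_B lo hi). \<exists>R\<in>prob_measures (Theta_B lo hi).
           absolutely_continuous P R \<and>
           (\<forall>S\<in>sets (Theta_B lo hi). measure Q S = (1 - \<eta>) * measure P S + \<eta> * measure R S)})"
proof -
  have sub: "subalgebra P E" if "subalgebra X E" "P \<in> prob_measures X" for P X E :: "real measure"
    using that by (simp add: prob_measures_iff subalgebra_cong_sets)
  show ?thesis
  proof (intro conjI allI impI ballI)
    fix X P Q :: "real measure"
    assume "P \<in> prob_measures X" "Q = P"
    then show "contam_div Q P = 0"
      by (simp add: prob_measures_iff contam_div_self)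
  next
    fix X P Q :: "real measure"
    assume "P \<in> prob_measures X" "Q \<in> prob_measures X"
      and "absolutely_continuous P Q \<and> (\<exists>C::real. AE x in P. RN_deriv P Q x \<le> ennreal C)"
    then show "continuous_on {0..1} (\<lambda>e. contam_div (mixture e Q P) P)"
      by (intro continuous_on_contam_div_mixture) (auto simp: prob_measures_iff)
  next
    fix P Q :: "real measure"
    assume "contam_div Q P < \<infinity>"
    then show "absolutely_continuous P Q"
      by (rule absolutely_continuous_if_contam_div_finite)
  next
    fix X P Q E :: "real measure"
    assume "P \<in> prob_measures X" "Q \<in> prob_measures X" "subalgebra X E"
    then show "contam_div (restr_to_subalg Q E) (restr_to_subalg P E) \<le> contam_div Q P"
      by (intro contam_div_restr_to_subalg_le[OF _ _ _ sub]) (auto simp: prob_measures_iff)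
  next
    fix X P Q E :: "real measure"
    assume "P \<in> prob_measures X" "Q \<in> prob_measures X" "subalgebra X E"
      and "AE x in P. RN_deriv (restr_to_subalg P E) (restr_to_subalg Q E) x = RN_deriv P Q x"
    then show "contam_div (restr_to_subalg Q E) (restr_to_subalg P E) = contam_div Q P"
      by (intro contam_div_restr_to_subalg_eq[OF _ _ _ sub]) (auto simp: prob_measures_iff)
  next
    fix P and \<eta> :: real
    assume "P \<in> prob_measures (Theta_B lo hi)" "\<eta> > 0"
    then show "{Q\<in>prob_measures (Theta_B lo hi). contam_div Q P \<le> ereal \<eta>} =
        {Q\<in>prob_measures (Theta_B lo hi). \<exists>R\<in>prob_measures (Theta_B lo hi).
           absolutely_continuous P R \<and>
           (\<forall>S\<in>sets (Theta_B lo hi). measure Q S = (1 - \<eta>) * measure P S + \<eta> * measure R S)}"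
      by (rule contam_div_sublevel_set_eq_contamination_set)
  qed
qed

end
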